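(* Let $\mu^*\in\mathbb P(S)$ with $\mu^*(x)>0$ for all $x\in S$. Then there exists $\alpha_0\in(\tfrac12,1)$ such that for every $\alpha\in[\alpha_0,1]$ there is a kernel $\bar Q^*$ (i.e. $\bar Q^*(\cdot|x)$ a probability on $D(x)$ for each $x$, equivalently $Q^*=\mu^*\otimes\bar Q^*\in\mathbb P(D)$) with $\mu^*=\mu^*P^{\bar Q^*}$, i.e. $\mu^*$ is a stationary distribution of the transition matrix $P^{\bar Q^*}$.
   Context: $S=\{1,\dots,d\}$ are the nodes of a connected undirected graph with edge set $E$ (no loops), and $D(x):=\{x'\in S:(x,x')\in E\}\cup\{x\}\subset A:=S$; assume $|D(x)|\ge2$ for all $x$. Fix $\alpha\in(0,1]$. For $a\in D(x)$ and $x'\in S$ let $p^{x,a}(x'):=\alpha$ if $x'=a$, $p^{x,a}(x'):=\frac{1-\alpha}{|D(x)|-1}$ if $x'\in D(x)\setminus\{a\}$, and $p^{x,a}(x'):=0$ otherwise (an individual at $x$ choosing $a$ moves to $a$ with probability $\alpha$ and otherwise uniformly to another element of $D(x)$). For a kernel $\bar Q$ with $\bar Q(\cdot|x)$ a probability on $D(x)$, $P^{\bar Q}$ is the $d\times d$ matrix with entries $p^{\bar Q}_{xx'}:=\sum_{a\in D(x)}p^{x,a}(x')\bar Q(a|x)$; $\mu$ is treated as a row vector and $\mu\otimes\bar Q$ denotes the measure $(x,a)\mapsto\mu(x)\bar Q(a|x)$ on $D:=\{(x,a):a\in D(x)\}$. *)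

theory Defs
  imports Complex_Main
begin

text \<open>Nodes S = {1..d}; E is a set of ordered pairs (symmetric, irreflexive).\<close>

definition Dset :: "(nat \<times> nat) set \<Rightarrow> nat \<Rightarrow> nat set" where
  "Dset E x = {x'. (x, x') \<in> E} \<union> {x}"

definition ptrans :: "real \<Rightarrow> (nat \<times> nat) set \<Rightarrow> nat \<Rightarrow> nat \<Rightarrow> nat \<Rightarrow> real" where
  "ptrans \<alpha> E x a x' =
     (if x' = a then \<alpha>
      else if x' \<in> Dset E x then (1 - \<alpha>) / (real (card (Dset E x)) - 1)
      else 0)"

(* Kernel: Qbar x a = Qbar(a|x); PQ gives entries of P^Qbar *)
definition PQ :: "real \<Rightarrow> (nat \<times> nat) set \<Rightarrow> (nat \<Rightarrow> nat \<Rightarrow> real) \<Rightarrow> nat \<Rightarrow> nat \<Rightarrow> real" where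
  "PQ \<alpha> E Qbar x x' = (\<Sum>a\<in>Dset E x. ptrans \<alpha> E x a x' * Qbar x a)"

definition is_kernel :: "nat \<Rightarrow> (nat \<times> nat) set \<Rightarrow> (nat \<Rightarrow> nat \<Rightarrow> real) \<Rightarrow> bool" where
  "is_kernel d E Qbar \<longleftrightarrow>
     (\<forall>x\<in>{1..d}. (\<forall>a\<in>Dset E x. Qbar x a \<ge> 0) \<and> (\<Sum>a\<in>Dset E x. Qbar x a) = 1)"

definition is_stationary :: "nat \<Rightarrow> (nat \<Rightarrow> real) \<Rightarrow> (nat \<Rightarrow> nat \<Rightarrow> real) \<Rightarrow> bool" where
  "is_stationary d \<mu> P \<longleftrightarrow> (\<forall>x'\<in>{1..d}. \<mu> x' = (\<Sum>x\<in>{1..d}. \<mu> x * P x x'))"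

end

theory Submission
  imports Defs
begin

text \<open>The walk that moves from \<open>x\<close> to each neighbour with probability \<open>(1 - \<alpha>) / \<mu> x\<close>
  carries the same probability flow \<open>1 - \<alpha>\<close> along every edge in both directions, so it is
  reversible and \<open>\<mu>\<close> is stationary for it. Choosing \<open>a\<close> at \<open>x\<close> sends mass \<open>\<alpha>\<close> to \<open>a\<close> and the
  scatter \<open>(1 - \<alpha>) / (|D(x)| - 1)\<close> to every other element of \<open>D(x)\<close>, so \<open>P\<^sup>Q\<close> depends affinely
  on \<open>Q\<close>; inverting this map turns every row that dominates the scatter into a kernel. For
  \<open>\<alpha>\<close> close to 1 the scatter is small and the rows of the walk dominate it.\<close>

definition scatter :: "real \<Rightarrow> (nat \<times> nat) set \<Rightarrow> nat \<Rightarrow> real" where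
  "scatter \<alpha> E x = (1 - \<alpha>) / (real (card (Dset E x)) - 1)"

definition kernel_of :: "real \<Rightarrow> (nat \<times> nat) set \<Rightarrow> (nat \<Rightarrow> nat \<Rightarrow> real) \<Rightarrow> nat \<Rightarrow> nat \<Rightarrow> real" where
  "kernel_of \<alpha> E R x a = (R x a - scatter \<alpha> E x) / (\<alpha> - scatter \<alpha> E x)"

definition reversible_walk :: "real \<Rightarrow> (nat \<times> nat) set \<Rightarrow> (nat \<Rightarrow> real) \<Rightarrow> nat \<Rightarrow> nat \<Rightarrow> real" where
  "reversible_walk \<alpha> E \<mu> x x' =
     (if x' = x then 1 - (real (card (Dset E x)) - 1) * (1 - \<alpha>) / \<mu> x
      else if (x, x') \<in> E then (1 - \<alpha>) / \<mu> x else 0)"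

lemma self_in_Dset: "x \<in> Dset E x"
  by (simp add: Dset_def)

lemma Dset_subset:
  assumes "E \<subseteq> {1..d} \<times> {1..d}" "x \<in> {1..d}"
  shows "Dset E x \<subseteq> {1..d}"
  using assms by (auto simp: Dset_def)

lemma card_neighbours:
  assumes "finite (Dset E x)" "(x, x) \<notin> E"
  shows "card {y. (x, y) \<in> E} = card (Dset E x) - 1"
  using assms by (simp add: Dset_def)

lemma PQ_notin_Dset:
  assumes "x' \<notin> Dset E x"
  shows "PQ \<alpha> E Q x x' = 0"
  unfolding PQ_def ptrans_def using assms by (intro sum.neutral) auto

lemma PQ_in_Dset:
  assumes fin: "finite (Dset E x)" and x': "x' \<in> Dset E x"
    and sum1: "(\<Sum>a\<in>Dset E x. Q x a) = 1"
  shows "PQ \<alpha> E Q x x' = scatter \<alpha> E x + (\<alpha> - scatter \<alpha> E x) * Q x x'"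
proof -
  have "PQ \<alpha> E Q x x' = \<alpha> * Q x x' + (\<Sum>a\<in>Dset E x - {x'}. ptrans \<alpha> E x a x' * Q x a)"
    using fin x' by (simp add: PQ_def ptrans_def sum.remove)
  also have "(\<Sum>a\<in>Dset E x - {x'}. ptrans \<alpha> E x a x' * Q x a)
      = scatter \<alpha> E x * (\<Sum>a\<in>Dset E x - {x'}. Q x a)"
    using x' by (auto simp: ptrans_def scatter_def sum_distrib_left intro: sum.cong)
  also have "(\<Sum>a\<in>Dset E x - {x'}. Q x a) = 1 - Q x x'"
    using fin x' sum1 by (simp add: sum_diff1)
  finally show ?thesis by (simp add: algebra_simps)
qed

lemma scatter_le_one_minus:
  assumes "card (Dset E x) \<ge> 2" "\<alpha> \<le> 1"
  shows "scatter \<alpha> E x \<le> 1 - \<alpha>"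
proof -
  have "real (card (Dset E x)) - 1 \<ge> 1" using assms(1) by simp
  moreover have "1 - \<alpha> \<le> (1 - \<alpha>) * (real (card (Dset E x)) - 1)"
    using calculation assms(2) mult_left_mono[of 1 "real (card (Dset E x)) - 1" "1 - \<alpha>"] by simp
  ultimately show ?thesis
    using assms(2) by (auto simp: scatter_def divide_le_eq)
qed

lemma sum_kernel_of:
  assumes "card (Dset E x) \<ge> 2" "(\<Sum>a\<in>Dset E x. R x a) = 1" "scatter \<alpha> E x < \<alpha>"
  shows "(\<Sum>a\<in>Dset E x. kernel_of \<alpha> E R x a) = 1"
proof -
  have "(\<Sum>a\<in>Dset E x. kernel_of \<alpha> E R x a)
      = (1 - real (card (Dset E x)) * scatter \<alpha> E x) / (\<alpha> - scatter \<alpha> E x)"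
    using assms(2) by (simp add: kernel_of_def sum_divide_distrib[symmetric] sum_subtractf)
  also have "real (card (Dset E x)) * scatter \<alpha> E x = (1 - \<alpha>) + scatter \<alpha> E x"
    using assms(1) by (simp add: scatter_def field_simps)
  finally show ?thesis using assms(3) by simp
qed

lemma PQ_kernel_of:
  assumes "finite (Dset E x)" "x' \<in> Dset E x" "card (Dset E x) \<ge> 2"
    and "(\<Sum>a\<in>Dset E x. R x a) = 1" "scatter \<alpha> E x < \<alpha>"
  shows "PQ \<alpha> E (kernel_of \<alpha> E R) x x' = R x x'"
proof -
  have "(\<Sum>a\<in>Dset E x. kernel_of \<alpha> E R x a) = 1"
    using assms(3-5) by (rule sum_kernel_of)
  with assms(1,2,5) show ?thesis
    by (simp add: PQ_in_Dset kernel_of_def)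
qed

lemma is_kernel_kernel_of:
  assumes "\<And>x. x \<in> {1..d} \<Longrightarrow> card (Dset E x) \<ge> 2"
    and "\<And>x. x \<in> {1..d} \<Longrightarrow> (\<Sum>a\<in>Dset E x. R x a) = 1"
    and "\<And>x a. x \<in> {1..d} \<Longrightarrow> a \<in> Dset E x \<Longrightarrow> scatter \<alpha> E x \<le> R x a"
    and "\<And>x. x \<in> {1..d} \<Longrightarrow> scatter \<alpha> E x < \<alpha>"
  shows "is_kernel d E (kernel_of \<alpha> E R)"
  unfolding is_kernel_def
proof (intro ballI conjI)
  fix x a assume "x \<in> {1..d}" "a \<in> Dset E x"
  then have "scatter \<alpha> E x \<le> R x a" "scatter \<alpha> E x < \<alpha>"
    using assms(3,4) by blast+
  then show "0 \<le> kernel_of \<alpha> E R x a"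
    by (simp add: kernel_of_def divide_nonneg_pos)
next
  fix x assume "x \<in> {1..d}"
  with assms(1,2,4) show "(\<Sum>a\<in>Dset E x. kernel_of \<alpha> E R x a) = 1"
    by (simp add: sum_kernel_of)
qed

lemma is_stationary_cong:
  assumes "\<And>x x'. x \<in> {1..d} \<Longrightarrow> x' \<in> {1..d} \<Longrightarrow> P x x' = P' x x'"
  shows "is_stationary d \<mu> P \<longleftrightarrow> is_stationary d \<mu> P'"
  using assms by (simp add: is_stationary_def)

lemma is_stationary_if_reversible:
  assumes rows: "\<And>x. x \<in> {1..d} \<Longrightarrow> (\<Sum>x'\<in>{1..d}. P x x') = 1"
    and balance: "\<And>x x'. x \<in> {1..d} \<Longrightarrow> x' \<in> {1..d} \<Longrightarrow> \<mu> x * P x x' = \<mu> x' * P x' x"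
  shows "is_stationary d \<mu> P"
  unfolding is_stationary_def
proof
  fix x' assume x': "x' \<in> {1..d}"
  have "(\<Sum>x\<in>{1..d}. \<mu> x * P x x') = \<mu> x' * (\<Sum>x\<in>{1..d}. P x' x)"
    using balance x' by (simp add: sum_distrib_left)
  then show "\<mu> x' = (\<Sum>x\<in>{1..d}. \<mu> x * P x x')" using rows x' by simp
qed

lemma reversible_walk_balance:
  assumes "\<And>x y. (x, y) \<in> E \<Longrightarrow> (y, x) \<in> E" "\<mu> x > 0" "\<mu> x' > 0"
  shows "\<mu> x * reversible_walk \<alpha> E \<mu> x x' = \<mu> x' * reversible_walk \<alpha> E \<mu> x' x"
  using assms by (auto simp: reversible_walk_def)

lemma reversible_walk_notin_Dset:
  assumes "x' \<notin> Dset E x"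
  shows "reversible_walk \<alpha> E \<mu> x x' = 0"
  using assms by (simp add: reversible_walk_def Dset_def)

lemma reversible_walk_sum_Dset:
  assumes fin: "finite (Dset E x)" and noloop: "(x, x) \<notin> E" and pos: "\<mu> x > 0"
  shows "(\<Sum>x'\<in>Dset E x. reversible_walk \<alpha> E \<mu> x x') = 1"
proof -
  have card_pos: "card (Dset E x) \<ge> 1"
    using fin self_in_Dset[of x E] by (metis One_nat_def Suc_leI card_gt_0_iff empty_iff)
  have "(\<Sum>x'\<in>Dset E x. reversible_walk \<alpha> E \<mu> x x')
      = reversible_walk \<alpha> E \<mu> x x + (\<Sum>x'\<in>{y. (x, y) \<in> E}. reversible_walk \<alpha> E \<mu> x x')"
    using fin noloop by (simp add: Dset_def)
  also have "(\<Sum>x'\<in>{y. (x, y) \<in> E}. reversible_walk \<alpha> E \<mu> x x') = (\<Sum>x'\<in>{y. (x, y) \<in> E}. (1 - \<alpha>) / \<mu> x)"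
    using noloop by (intro sum.cong) (auto simp: reversible_walk_def)
  also have "reversible_walk \<alpha> E \<mu> x x + \<dots> = 1"
    using pos card_pos by (simp add: reversible_walk_def card_neighbours[OF fin noloop] of_nat_diff)
  finally show ?thesis .
qed

lemma reversible_walk_row_sum:
  assumes E_sub: "E \<subseteq> {1..d} \<times> {1..d}" and noloop: "(x, x) \<notin> E"
    and x: "x \<in> {1..d}" and pos: "\<mu> x > 0"
  shows "(\<Sum>x'\<in>{1..d}. reversible_walk \<alpha> E \<mu> x x') = 1"
proof -
  have "(\<Sum>x'\<in>{1..d}. reversible_walk \<alpha> E \<mu> x x') = (\<Sum>x'\<in>Dset E x. reversible_walk \<alpha> E \<mu> x x')"
    using Dset_subset[OF E_sub x] reversible_walk_notin_Dset by (intro sum.mono_neutral_right) auto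
  also have "\<dots> = 1"
    using Dset_subset[OF E_sub x] finite_subset noloop pos by (blast intro: reversible_walk_sum_Dset)
  finally show ?thesis .
qed

lemma reversible_walk_ge:
  assumes "0 < \<mu> x" "\<mu> x \<le> 1" "\<alpha> \<le> 1" "(1 - \<alpha>) * real (card (Dset E x)) \<le> \<mu> x"
    and "x' \<in> Dset E x"
  shows "1 - \<alpha> \<le> reversible_walk \<alpha> E \<mu> x x'"
proof -
  have neighbour: "1 - \<alpha> \<le> (1 - \<alpha>) / \<mu> x"
    using assms(1-3) by (simp add: le_divide_eq mult_left_le)
  have "(real (card (Dset E x)) - 1) * (1 - \<alpha>) \<le> \<mu> x - (1 - \<alpha>)"
    using assms(4) by (simp add: algebra_simps)
  also have "\<dots> \<le> \<mu> x - \<mu> x * (1 - \<alpha>)"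
    using assms(2,3) mult_right_mono[of "\<mu> x" 1 "1 - \<alpha>"] by simp
  finally have "1 - \<alpha> \<le> 1 - (real (card (Dset E x)) - 1) * (1 - \<alpha>) / \<mu> x"
    using assms(1) by (simp add: divide_le_eq algebra_simps)
  with neighbour show ?thesis
    using assms(5) by (auto simp: reversible_walk_def Dset_def)
qed

lemma stationary_kernel_exists:
  assumes E_sub: "E \<subseteq> {1..d} \<times> {1..d}"
    and E_sym: "\<And>x y. (x, y) \<in> E \<Longrightarrow> (y, x) \<in> E"
    and E_noloop: "\<And>x. (x, x) \<notin> E"
    and D_card: "\<And>x. x \<in> {1..d} \<Longrightarrow> card (Dset E x) \<ge> 2"
    and \<mu>_pos: "\<And>x. x \<in> {1..d} \<Longrightarrow> 0 < \<mu> x"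
    and \<mu>_le1: "\<And>x. x \<in> {1..d} \<Longrightarrow> \<mu> x \<le> 1"
    and \<alpha>: "1/2 < \<alpha>" "\<alpha> \<le> 1"
    and close: "\<And>x. x \<in> {1..d} \<Longrightarrow> (1 - \<alpha>) * real (card (Dset E x)) \<le> \<mu> x"
  shows "\<exists>Qbar. is_kernel d E Qbar \<and> is_stationary d \<mu> (PQ \<alpha> E Qbar)"
proof (intro exI conjI)
  define R where "R = reversible_walk \<alpha> E \<mu>"
  have fin: "finite (Dset E x)" if "x \<in> {1..d}" for x
    using Dset_subset[OF E_sub that] finite_subset by blast
  have rows: "(\<Sum>a\<in>Dset E x. R x a) = 1" if "x \<in> {1..d}" for x
    unfolding R_def using fin that E_noloop \<mu>_pos by (intro reversible_walk_sum_Dset)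
  have scatter_lt: "scatter \<alpha> E x < \<alpha>" if "x \<in> {1..d}" for x
    using scatter_le_one_minus[OF D_card[OF that] \<alpha>(2)] \<alpha>(1) by linarith
  have "scatter \<alpha> E x \<le> R x a" if "x \<in> {1..d}" "a \<in> Dset E x" for x a
    using scatter_le_one_minus[OF D_card[OF that(1)] \<alpha>(2)] \<alpha>(2) that \<mu>_pos \<mu>_le1 close
    unfolding R_def by (meson order_trans reversible_walk_ge)
  then show "is_kernel d E (kernel_of \<alpha> E R)"
    using D_card rows scatter_lt by (intro is_kernel_kernel_of)
  have "PQ \<alpha> E (kernel_of \<alpha> E R) x x' = R x x'" if "x \<in> {1..d}" for x x'
  proof (cases "x' \<in> Dset E x")
    case True
    then show ?thesis using fin D_card rows scatter_lt that by (intro PQ_kernel_of)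
  next
    case False
    then show ?thesis unfolding R_def by (simp add: PQ_notin_Dset reversible_walk_notin_Dset)
  qed
  moreover have "is_stationary d \<mu> R"
    unfolding R_def using E_sub E_noloop \<mu>_pos
    by (intro is_stationary_if_reversible reversible_walk_row_sum reversible_walk_balance[OF E_sym])
  ultimately show "is_stationary d \<mu> (PQ \<alpha> E (kernel_of \<alpha> E R))"
    using is_stationary_cong[of d "PQ \<alpha> E (kernel_of \<alpha> E R)" R \<mu>] by blast
qed

theorem mainTheorem13:
  fixes d :: nat and E :: "(nat \<times> nat) set" and \<mu> :: "nat \<Rightarrow> real"
  assumes E_sub: "E \<subseteq> {1..d} \<times> {1..d}"
    and E_sym: "\<And>x y. (x, y) \<in> E \<Longrightarrow> (y, x) \<in> E"
    and E_noloop: "\<And>x. (x, x) \<notin> E"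
    and E_conn: "\<And>x y. x \<in> {1..d} \<Longrightarrow> y \<in> {1..d} \<Longrightarrow> (x, y) \<in> E\<^sup>*"
    and D_card: "\<And>x. x \<in> {1..d} \<Longrightarrow> card (Dset E x) \<ge> 2"
    and \<mu>_pos: "\<And>x. x \<in> {1..d} \<Longrightarrow> \<mu> x > 0"
    and \<mu>_sum: "(\<Sum>x\<in>{1..d}. \<mu> x) = 1"
  shows "\<exists>\<alpha>0::real. 1/2 < \<alpha>0 \<and> \<alpha>0 < 1 \<and>
           (\<forall>\<alpha>. \<alpha>0 \<le> \<alpha> \<and> \<alpha> \<le> 1 \<longrightarrow>
              (\<exists>Qbar. is_kernel d E Qbar \<and> is_stationary d \<mu> (PQ \<alpha> E Qbar)))"
proof -
  have \<mu>_le1: "\<mu> x \<le> 1" if "x \<in> {1..d}" for x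
    using member_le_sum[OF that, of \<mu>] \<mu>_pos \<mu>_sum by (simp add: less_imp_le)
  have "{1..d} \<noteq> {}" using \<mu>_sum by (metis sum.empty zero_neq_one)
  define m where "m = Min (\<mu> ` {1..d})"
  have m_le: "m \<le> \<mu> x" if "x \<in> {1..d}" for x
    unfolding m_def using that by simp
  have m_pos: "0 < m"
    using Min_in[of "\<mu> ` {1..d}"] \<open>{1..d} \<noteq> {}\<close> \<mu>_pos unfolding m_def by auto
  have m_le1: "m \<le> 1"
    using \<open>{1..d} \<noteq> {}\<close> m_le \<mu>_le1 by (meson all_not_in_conv order_trans)
  define \<alpha>0 where "\<alpha>0 = 1 - m / (2 * real d + 1)"
  have "1/2 < \<alpha>0" "\<alpha>0 < 1"
    using m_pos m_le1 \<open>{1..d} \<noteq> {}\<close> unfolding \<alpha>0_def by (auto simp: field_simps)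
  moreover have "(1 - \<alpha>) * real (card (Dset E x)) \<le> \<mu> x"
    if "\<alpha>0 \<le> \<alpha>" "x \<in> {1..d}" for \<alpha> x
  proof -
    have "card (Dset E x) \<le> d"
      using card_mono[OF _ Dset_subset[OF E_sub \<open>x \<in> {1..d}\<close>]] by simp
    then have "(1 - \<alpha>) * real (card (Dset E x)) \<le> m / (2 * real d + 1) * real d"
      using that m_pos unfolding \<alpha>0_def by (intro mult_mono) auto
    also have "\<dots> \<le> m" using m_pos by (simp add: field_simps)
    finally show ?thesis using m_le[OF \<open>x \<in> {1..d}\<close>] by linarith
  qed
  ultimately show ?thesis
    by (intro exI[of _ \<alpha>0] conjI allI impI
        stationary_kernel_exists[OF E_sub E_sym E_noloop D_card \<mu>_pos \<mu>_le1]) auto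
qed

end
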